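(* Let $Q$ be an absolutely continuous stochastic algorithm with Hamiltonian $H$, and suppose that for all $k\in[n]$, $h\in\mathcal{H}$, $y,y'\in\mathcal{X}$ and $\mathbf{x}\in\mathcal{X}^n$ we have $D^k_{y,y'}H(h,\mathbf{x})\le c$ and $h(y)\in[0,b]$. Then for $\delta>0$, with probability at least $1-\delta$ in $\mathbf{X}\sim\mu^n$ and $h\sim Q_{\mathbf{X}}$, $$\Delta(h,\mathbf{X})\le 2\sqrt{\hat L(h,\mathbf{X})\,b\left(c^2+\frac{\ln(1/\delta)}{n}\right)}+5b\left(c^2+\frac{\ln(1/\delta)}{n}\right).$$
   Context: $\mathcal{X}$ is a measurable space with probability measure $\mu$, $\mathbf{X}=(X_1,\dots,X_n)\sim\mu^n$, $X\sim\mu$. $\mathcal{H}$ is a measurable space of measurable functions $h:\mathcal{X}\to[0,\infty)$ with nonnegative a-priori measure $\pi$. A stochastic algorithm $Q:\mathbf{x}\mapsto Q_{\mathbf{x}}$ (probability measures on $\mathcal{H}$) is absolutely continuous if each $Q_{\mathbf{x}}$ and $\pi$ are mutually absolutely continuous. A measurable $H:\mathcal{H}\times\mathcal{X}^n\to\mathbb{R}$ is a Hamiltonian for $Q$ if $dQ_{\mathbf{x}}(h)=e^{H(h,\mathbf{x})}d\pi(h)/Z(\mathbf{x})$ with $Z(\mathbf{x})=\int_{\mathcal{H}}e^{H(h,\mathbf{x})}d\pi(h)$. Empirical loss $\hat L(h,\mathbf{x})=\frac1n\sum_{i=1}^n h(x_i)$; generalization gap $\Delta(h,\mathbf{x})=\mathbb{E}[h(X)]-\hat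 L(h,\mathbf{x})$. $S^k_y\mathbf{x}$ replaces the $k$-th coordinate of $\mathbf{x}$ by $y$; $D^k_{y,y'}G(h,\mathbf{x})=G(h,S^k_y\mathbf{x})-G(h,S^k_{y'}\mathbf{x})$. Probability "in $\mathbf{X}\sim\mu^n$ and $h\sim Q_{\mathbf{X}}$" is w.r.t. the joint law. All functions are assumed to have finite exponential moments of all orders. *)

theory Defs
  imports "HOL-Probability.Probability"
begin

definition sample_measure :: "nat \<Rightarrow> 'x measure \<Rightarrow> (nat \<Rightarrow> 'x) measure" where
  "sample_measure n M = PiM {..<n} (\<lambda>_. M)"

definition emp_loss :: "nat \<Rightarrow> ('x \<Rightarrow> real) \<Rightarrow> (nat \<Rightarrow> 'x) \<Rightarrow> real" where
  "emp_loss n h x = (\<Sum>i<n. h (x i)) / real n"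

definition gen_gap :: "'x measure \<Rightarrow> nat \<Rightarrow> ('x \<Rightarrow> real) \<Rightarrow> (nat \<Rightarrow> 'x) \<Rightarrow> real" where
  "gen_gap M n h x = (\<integral>y. h y \<partial>M) - emp_loss n h x"

definition subst_coord :: "nat \<Rightarrow> 'x \<Rightarrow> (nat \<Rightarrow> 'x) \<Rightarrow> (nat \<Rightarrow> 'x)" where
  "subst_coord k y x = x(k := y)"

definition diff_op :: "nat \<Rightarrow> 'x \<Rightarrow> 'x \<Rightarrow> ('h \<Rightarrow> (nat \<Rightarrow> 'x) \<Rightarrow> real) \<Rightarrow> 'h \<Rightarrow> (nat \<Rightarrow> 'x) \<Rightarrow> real" where
  "diff_op k y y' G h x = G h (subst_coord k y x) - G h (subst_coord k y' x)"

definition partition_fn :: "'h measure \<Rightarrow> ('h \<Rightarrow> 'z \<Rightarrow> real) \<Rightarrow> 'z \<Rightarrow> real" where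
  "partition_fn \<pi> H x = (\<integral>h. exp (H h x) \<partial>\<pi>)"

definition has_hamiltonian ::
  "'h measure \<Rightarrow> 'z measure \<Rightarrow> ('z \<Rightarrow> 'h measure) \<Rightarrow> ('h \<Rightarrow> 'z \<Rightarrow> real) \<Rightarrow> bool" where
  "has_hamiltonian \<pi> Z Q H \<longleftrightarrow>
     (\<lambda>(h, x). H h x) \<in> borel_measurable (\<pi> \<Otimes>\<^sub>M Z) \<and>
     (\<forall>x\<in>space Z. integrable \<pi> (\<lambda>h. exp (H h x)) \<and>
        Q x = density \<pi> (\<lambda>h. ennreal (exp (H h x) / partition_fn \<pi> H x)))"

definition absolutely_continuous_alg :: "'h measure \<Rightarrow> 'z measure \<Rightarrow> ('z \<Rightarrow> 'h measure) \<Rightarrow> bool" where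
  "absolutely_continuous_alg \<pi> Z Q \<longleftrightarrow>
     (\<forall>x\<in>space Z. prob_space (Q x) \<and> sets (Q x) = sets \<pi> \<and>
        absolutely_continuous \<pi> (Q x) \<and> absolutely_continuous (Q x) \<pi>)"

end

theory Submission
  imports Defs
begin

text \<open>
  Let \<open>\<psi>(h, x) = H(h, x) - ln Z(x)\<close> be the log-density of \<open>Q\<^sub>x\<close> with respect to \<open>\<pi>\<close>.
  Since \<open>\<integral> exp \<psi>(h, x) d\<pi>(h) = 1\<close> for every sample \<open>x\<close>, exchanging the order of
  integration and applying Markov's inequality shows: if \<open>F\<close> satisfies
  \<open>E\<^sub>X exp (\<psi>(h, X) + F(h, X)) \<le> E\<^sub>X exp \<psi>(h, X)\<close> for every fixed \<open>h\<close>, then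
  \<open>F(h, X) \<le> ln (1/\<delta>)\<close> with probability at least \<open>1 - \<delta>\<close> in \<open>X\<close> and \<open>h \<sim> Q\<^sub>X\<close>.

  Changing one sample point moves \<open>H\<close> by at most \<open>c\<close>, hence also \<open>ln Z\<close>, so \<open>\<psi>(h, \<cdot>)\<close>
  has bounded differences \<open>2c\<close>. Integrating out the sample points one at a time, Hoeffding's
  lemma for the \<open>\<psi>\<close>-part and a Bernstein-type bound for the loss \<open>0 \<le> h \<le> b\<close>, combined by
  Cauchy--Schwarz, give this hypothesis for \<open>F = n (\<lambda> \<Delta> - \<lambda>\<^sup>2 b E h - c\<^sup>2)\<close>, with Jensen's
  inequality absorbing the mean of \<open>\<psi>\<close>. Choosing \<open>\<lambda> = sqrt (u / (b E h))\<close> for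
  \<open>u = c\<^sup>2 + ln (1/\<delta>) / n\<close> and solving the resulting quadratic inequality for
  \<open>\<Delta> = E h - L\<close> gives the bound.
\<close>

section \<open>Exponential moments of bounded random variables\<close>

lemma exp_neg_le_quadratic:
  fixes u :: real
  assumes "0 \<le> u"
  shows "exp (- u) \<le> 1 - u + u\<^sup>2 / 2"
proof -
  define \<phi> where "\<phi> = (\<lambda>u::real. 1 - u + u\<^sup>2 / 2 - exp (- u))"
  have "\<phi> 0 \<le> \<phi> u"
  proof (rule DERIV_nonneg_imp_nondecreasing[OF assms])
    fix v :: real assume "0 \<le> v"
    have "(\<phi> has_real_derivative (exp (- v) - (1 - v))) (at v)"
      unfolding \<phi>_def by (auto intro!: derivative_eq_intros simp: power2_eq_square)
    moreover have "0 \<le> exp (- v) - (1 - v)"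
      using exp_ge_add_one_self[of "- v"] by simp
    ultimately show "\<exists>y. (\<phi> has_real_derivative y) (at v) \<and> 0 \<le> y" by blast
  qed
  thus ?thesis by (simp add: \<phi>_def)
qed

lemma mult_le_weighted_squares:
  fixes X Y r :: real
  assumes "r > 0"
  shows "X * Y \<le> (r * X\<^sup>2 + Y\<^sup>2 / r) / 2"
proof -
  have "0 \<le> (r * X - Y)\<^sup>2 / r" using assms by simp
  also have "\<dots> = r * X\<^sup>2 + Y\<^sup>2 / r - 2 * X * Y"
    using assms by (simp add: power2_eq_square field_simps)
  finally show ?thesis by simp
qed

context prob_space
begin

lemma mgf_centered_nonneg_bounded_le:
  fixes g :: "'a \<Rightarrow> real"
  assumes g[measurable]: "g \<in> borel_measurable M"
    and g_bounds: "\<And>y. y \<in> space M \<Longrightarrow> 0 \<le> g y \<and> g y \<le> b" and l: "0 \<le> l"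
  shows "integrable M (\<lambda>y. exp (l * (expectation g - g y)))"
    and "expectation (\<lambda>y. exp (l * (expectation g - g y))) \<le> exp (l\<^sup>2 * b * expectation g / 2)"
proof -
  define m where "m = expectation g"
  have int_g: "integrable M g"
    by (rule integrable_const_bound[where B=b]) (use g_bounds in auto)
  show int_exp: "integrable M (\<lambda>y. exp (l * (expectation g - g y)))"
    by (rule integrable_const_bound[where B="exp (l * m)"])
      (use g_bounds l in \<open>auto simp: m_def mult_left_mono\<close>)
  \<comment> \<open>\<open>g\<^sup>2 \<le> b g\<close> turns the quadratic Taylor bound into one that is linear in \<open>g\<close>.\<close>
  have pointwise: "exp (l * (m - g y)) \<le> exp (l * m) * (1 - l * g y + l\<^sup>2 * b * g y / 2)"
    if y: "y \<in> space M" for y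
  proof -
    have "exp (l * (m - g y)) = exp (l * m) * exp (- (l * g y))"
      by (simp add: right_diff_distrib flip: exp_add)
    also have "exp (- (l * g y)) \<le> 1 - l * g y + (l * g y)\<^sup>2 / 2"
      by (rule exp_neg_le_quadratic) (use g_bounds[OF y] l in auto)
    also have "(l * g y)\<^sup>2 \<le> l\<^sup>2 * b * g y"
    proof -
      have "g y * g y \<le> b * g y" using g_bounds[OF y] by (intro mult_right_mono) auto
      hence "l\<^sup>2 * (g y * g y) \<le> l\<^sup>2 * (b * g y)" by (intro mult_left_mono) auto
      thus ?thesis by (simp add: power2_eq_square algebra_simps)
    qed
    finally show ?thesis by (simp add: mult_left_mono)
  qed
  have "expectation (\<lambda>y. exp (l * (m - g y)))
      \<le> expectation (\<lambda>y. exp (l * m) * (1 - l * g y + l\<^sup>2 * b * g y / 2))"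
    by (rule integral_mono) (use int_exp pointwise int_g in \<open>auto simp: m_def\<close>)
  also have "\<dots> = exp (l * m) * (1 + (- (l * m) + l\<^sup>2 * b * m / 2))"
    using int_g by (simp add: m_def prob_space algebra_simps)
  also have "\<dots> \<le> exp (l * m) * exp (- (l * m) + l\<^sup>2 * b * m / 2)"
    by (intro mult_left_mono exp_ge_add_one_self) simp
  also have "\<dots> = exp (l\<^sup>2 * b * m / 2)" by (simp flip: exp_add)
  finally show "expectation (\<lambda>y. exp (l * (expectation g - g y))) \<le> exp (l\<^sup>2 * b * expectation g / 2)"
    by (simp add: m_def)
qed

lemma integrable_of_range_le:
  fixes e :: "'a \<Rightarrow> real"
  assumes "e \<in> borel_measurable M"
    and e_range: "\<And>y y'. y \<in> space M \<Longrightarrow> y' \<in> space M \<Longrightarrow> e y - e y' \<le> d"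
  shows "integrable M e"
proof -
  obtain y0 where y0: "y0 \<in> space M" using not_empty by blast
  show ?thesis
    by (rule integrable_const_bound[where B="\<bar>e y0\<bar> + \<bar>d\<bar>"])
      (use assms y0 in \<open>force intro!: AE_I2 simp: abs_le_iff\<close>)+
qed

lemma mgf_bounded_range_plus_centered_le:
  fixes e g :: "'a \<Rightarrow> real"
  assumes e[measurable]: "e \<in> borel_measurable M"
    and e_range: "\<And>y y'. y \<in> space M \<Longrightarrow> y' \<in> space M \<Longrightarrow> e y - e y' \<le> d"
    and g[measurable]: "g \<in> borel_measurable M"
    and g_bounds: "\<And>y. y \<in> space M \<Longrightarrow> 0 \<le> g y \<and> g y \<le> b" and l: "0 \<le> l"
  shows "integrable M (\<lambda>y. exp (e y + l * (expectation g - g y)))"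
    and "expectation (\<lambda>y. exp (e y + l * (expectation g - g y)))
           \<le> exp (expectation e + d\<^sup>2 / 4 + l\<^sup>2 * b * expectation g)"
proof -
  define m where "m = expectation g"
  obtain y0 where y0: "y0 \<in> space M" using not_empty by blast
  have bdd: "bdd_below (e ` space M)"
    using e_range[OF y0] by (intro bdd_belowI[where m="e y0 - d"]) (auto simp: algebra_simps)
  define a where "a = Inf (e ` space M)"
  have e_in: "e y \<in> {a..a + d}" if y: "y \<in> space M" for y
  proof -
    have "a \<le> e y" unfolding a_def by (rule cInf_lower) (use y bdd in auto)
    moreover have "e y - d \<le> a" unfolding a_def
      by (rule cInf_greatest) (use y e_range[OF y] in \<open>auto simp: algebra_simps\<close>)
    ultimately show ?thesis by simp
  qed
  interpret bounded: interval_bounded_random_variable M e a "a + d"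
    using e_in by unfold_locales (simp_all add: AE_I2)
  have int_e2: "integrable M (\<lambda>y. exp (2 * e y))"
  proof (rule integrable_of_range_le[where d="exp (2 * (a + d))"])
    fix y y' assume "y \<in> space M"
    hence "e y \<le> a + d" using e_in by simp
    hence "exp (2 * e y) \<le> exp (2 * (a + d))" by simp
    thus "exp (2 * e y) - exp (2 * e y') \<le> exp (2 * (a + d))"
      using exp_gt_zero[of "2 * e y'"] by linarith
  qed measurable
  \<comment> \<open>The weight \<open>r = B / A\<close> makes the weighted AM--GM bound as sharp as Cauchy--Schwarz.\<close>
  define A where "A = exp (expectation e + d\<^sup>2 / 4)"
  define B where "B = exp (l\<^sup>2 * b * m)"
  have hoeffding: "expectation (\<lambda>y. exp (2 * e y)) \<le> A\<^sup>2"
  proof -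
    have "ennreal (expectation (\<lambda>y. exp (2 * (e y - expectation e))))
        = (\<integral>\<^sup>+y. exp (2 * (e y - expectation e)) \<partial>M)"
      by (rule nn_integral_eq_integral[symmetric]) (use int_e2 in \<open>auto simp: exp_diff\<close>)
    also have "\<dots> \<le> ennreal (exp (2\<^sup>2 * (a + d - a)\<^sup>2 / 8))"
      by (rule bounded.Hoeffdings_lemma_nn_integral) simp
    finally have "expectation (\<lambda>y. exp (2 * e y)) / exp (2 * expectation e) \<le> exp (d\<^sup>2 / 2)"
      by (simp add: ennreal_le_iff power2_eq_square right_diff_distrib exp_diff)
    hence "expectation (\<lambda>y. exp (2 * e y)) \<le> exp (d\<^sup>2 / 2) * exp (2 * expectation e)"
      by (simp add: divide_le_eq)
    also have "\<dots> = A\<^sup>2"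
      unfolding A_def power2_eq_square exp_add[symmetric] by (simp add: field_simps)
    finally show ?thesis .
  qed
  have two_l: "0 \<le> 2 * l" using l by simp
  note bernstein = mgf_centered_nonneg_bounded_le[OF g g_bounds two_l]
  have int_g2: "integrable M (\<lambda>y. exp (2 * (l * (m - g y))))"
    using bernstein(1) by (simp add: m_def mult.assoc)
  have bernstein': "expectation (\<lambda>y. exp (2 * (l * (m - g y)))) \<le> B\<^sup>2"
    using bernstein(2)
    by (simp add: B_def m_def power2_eq_square mult.assoc mult.left_commute flip: exp_add)
  define r where "r = B / A"
  have r: "r > 0" by (simp add: r_def A_def B_def)
  define bound where "bound = (\<lambda>y. (r * exp (2 * e y) + exp (2 * (l * (m - g y))) / r) / 2)"
  have pointwise: "exp (e y + l * (m - g y)) \<le> bound y" for y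
  proof -
    have "exp (e y + l * (m - g y)) = exp (e y) * exp (l * (m - g y))" by (simp add: exp_add)
    also have "\<dots> \<le> (r * (exp (e y))\<^sup>2 + (exp (l * (m - g y)))\<^sup>2 / r) / 2"
      by (rule mult_le_weighted_squares[OF r])
    also have "\<dots> = bound y"
      by (simp add: bound_def power2_eq_square flip: exp_add)
    finally show ?thesis .
  qed
  have int_bound: "integrable M bound"
    using int_e2 int_g2 by (simp add: bound_def)
  have int_exp: "integrable M (\<lambda>y. exp (e y + l * (m - g y)))"
    by (rule Bochner_Integration.integrable_bound[OF int_bound])
      (use pointwise in \<open>auto intro!: AE_I2 order.trans[OF _ abs_ge_self]\<close>)
  thus "integrable M (\<lambda>y. exp (e y + l * (expectation g - g y)))" by (simp add: m_def)
  have "expectation (\<lambda>y. exp (e y + l * (m - g y))) \<le> expectation bound"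
    by (rule integral_mono[OF int_exp int_bound pointwise])
  also have "\<dots> = (r * expectation (\<lambda>y. exp (2 * e y))
                    + expectation (\<lambda>y. exp (2 * (l * (m - g y)))) / r) / 2"
    using int_e2 int_g2 by (simp add: bound_def)
  also have "\<dots> \<le> (r * A\<^sup>2 + B\<^sup>2 / r) / 2"
    using hoeffding bernstein' r by (intro divide_right_mono add_mono mult_left_mono) auto
  also have "\<dots> = A * B"
    using r by (simp add: r_def A_def B_def power2_eq_square field_simps)
  finally show "expectation (\<lambda>y. exp (e y + l * (expectation g - g y)))
      \<le> exp (expectation e + d\<^sup>2 / 4 + l\<^sup>2 * b * expectation g)"
    by (simp add: A_def B_def m_def exp_add)
qed

end

section \<open>Functions of independent samples with bounded differences\<close>

definition bounded_differences :: "'i set \<Rightarrow> 'x measure \<Rightarrow> (('i \<Rightarrow> 'x) \<Rightarrow> real) \<Rightarrow> real \<Rightarrow> bool" where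
  "bounded_differences I M f d \<longleftrightarrow>
     (\<forall>i\<in>I. \<forall>x\<in>space (PiM I (\<lambda>_. M)). \<forall>y\<in>space M. \<forall>y'\<in>space M. f (x(i := y)) - f (x(i := y')) \<le> d)"

lemma bounded_differencesD:
  "bounded_differences I M f d \<Longrightarrow> i \<in> I \<Longrightarrow> x \<in> space (PiM I (\<lambda>_. M)) \<Longrightarrow>
     y \<in> space M \<Longrightarrow> y' \<in> space M \<Longrightarrow> f (x(i := y)) - f (x(i := y')) \<le> d"
  unfolding bounded_differences_def by blast

lemma bounded_differences_diff_le:
  assumes I: "finite I" and f: "bounded_differences I M f d"
    and x: "x \<in> space (PiM I (\<lambda>_. M))" and x': "x' \<in> space (PiM I (\<lambda>_. M))"
  shows "f x - f x' \<le> real (card I) * d"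
proof -
  \<comment> \<open>Replace the coordinates in \<open>J\<close> one at a time.\<close>
  define mix where "mix = (\<lambda>J j. if j \<in> J then x' j else x j)"
  have mix_space: "mix J \<in> space (PiM I (\<lambda>_. M))" for J
    using x x' by (auto simp: mix_def space_PiM PiE_def extensional_def Pi_def)
  have "f x - f (mix J) \<le> real (card J) * d" if "J \<subseteq> I" for J
    using finite_subset[OF that I] that
  proof (induction J rule: finite_induct)
    case empty
    thus ?case by (simp add: mix_def)
  next
    case (insert j J)
    have j: "j \<in> I" and xj: "x j \<in> space M" "x' j \<in> space M"
      using insert.prems x x' by (auto simp: space_PiM PiE_def Pi_def)
    have unchanged: "(mix J)(j := x j) = mix J" and step: "mix (insert j J) = (mix J)(j := x' j)"
      using insert.hyps by (auto simp: mix_def)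
    have "f ((mix J)(j := x j)) - f ((mix J)(j := x' j)) \<le> d"
      by (rule bounded_differencesD[OF f j mix_space xj])
    hence "f (mix J) - f (mix (insert j J)) \<le> d"
      by (simp only: unchanged step)
    thus ?case using insert by (simp add: algebra_simps)
  qed
  moreover have "mix I = x'"
    using x x' by (auto simp: mix_def space_PiM PiE_def extensional_def fun_eq_iff)
  ultimately show ?thesis by (metis order_refl)
qed

lemma integrable_bounded_differences_PiM:
  assumes M: "prob_space M" and I: "finite I"
    and f: "f \<in> borel_measurable (PiM I (\<lambda>_. M))" and f_bd: "bounded_differences I M f d"
  shows "integrable (PiM I (\<lambda>_. M)) f"
    and "integrable (PiM I (\<lambda>_. M)) (\<lambda>x. exp (f x))"
proof -
  interpret P: prob_space "PiM I (\<lambda>_. M)"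
    using M by (intro prob_space_PiM) simp
  note diff_le = bounded_differences_diff_le[OF I f_bd]
  show "integrable (PiM I (\<lambda>_. M)) f"
    using diff_le by (intro P.integrable_of_range_le[OF f])
  obtain x0 where x0: "x0 \<in> space (PiM I (\<lambda>_. M))" using P.not_empty by blast
  show "integrable (PiM I (\<lambda>_. M)) (\<lambda>x. exp (f x))"
  proof (rule P.integrable_of_range_le[where d="exp (f x0 + real (card I) * d)"])
    fix x x' assume "x \<in> space (PiM I (\<lambda>_. M))"
    hence "exp (f x) \<le> exp (f x0 + real (card I) * d)"
      using diff_le[OF _ x0] by (simp add: algebra_simps)
    thus "exp (f x) - exp (f x') \<le> exp (f x0 + real (card I) * d)"
      using exp_gt_zero[of "f x'"] by linarith
  qed (use f in measurable)
qed

lemma bounded_differences_section_diff_le: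
  assumes f: "bounded_differences (insert i I) M f d" and x: "x \<in> space (PiM I (\<lambda>_. M))"
    and y: "y \<in> space M" and y': "y' \<in> space M"
  shows "f (x(i := y)) - f (x(i := y')) \<le> d"
proof -
  have "x(i := y) \<in> space (PiM (insert i I) (\<lambda>_. M))"
    using x y by (simp add: space_PiM PiE_fun_upd)
  from bounded_differencesD[OF f insertI1 this y y'] show ?thesis by simp
qed

lemma measurable_section_PiM:
  assumes "f \<in> borel_measurable (PiM (insert i I) (\<lambda>_. M))" and "x \<in> space (PiM I (\<lambda>_. M))"
  shows "(\<lambda>y. f (x(i := y))) \<in> borel_measurable M"
  using measurable_comp[OF measurable_Pair1'[OF assms(2)] measurable_comp[OF measurable_add_dim assms(1)]]
  by (simp add: comp_def)

lemma integrable_section_PiM: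
  assumes "prob_space M" and f: "f \<in> borel_measurable (PiM (insert i I) (\<lambda>_. M))"
    and "bounded_differences (insert i I) M f d" and x: "x \<in> space (PiM I (\<lambda>_. M))"
  shows "integrable M (\<lambda>y. f (x(i := y)))"
  using assms by (intro prob_space.integrable_of_range_le measurable_section_PiM)
    (auto intro: bounded_differences_section_diff_le)

lemma bounded_differences_integral_section:
  assumes M: "prob_space M" and i: "i \<notin> I"
    and f: "f \<in> borel_measurable (PiM (insert i I) (\<lambda>_. M))"
    and f_bd: "bounded_differences (insert i I) M f d"
  shows "bounded_differences I M (\<lambda>x. \<integral>y. f (x(i := y)) \<partial>M) d"
  unfolding bounded_differences_def
proof (intro ballI)
  fix j x y y' assume j: "j \<in> I" and x: "x \<in> space (PiM I (\<lambda>_. M))"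
    and y: "y \<in> space M" and y': "y' \<in> space M"
  interpret prob_space M by fact
  have x_upd: "x(j := y) \<in> space (PiM I (\<lambda>_. M))" "x(j := y') \<in> space (PiM I (\<lambda>_. M))"
    using x y y' j by (auto simp: space_PiM PiE_def extensional_def Pi_def)
  note int = integrable_section_PiM[OF M f f_bd x_upd(1)] integrable_section_PiM[OF M f f_bd x_upd(2)]
  have ij: "i \<noteq> j" using i j by auto
  have "(\<integral>z. f (x(j := y, i := z)) \<partial>M) - (\<integral>z. f (x(j := y', i := z)) \<partial>M)
      = (\<integral>z. f (x(j := y, i := z)) - f (x(j := y', i := z)) \<partial>M)"
    using int by simp
  also have "\<dots> \<le> (\<integral>z. d \<partial>M)"
  proof (rule integral_mono)
    fix z assume z: "z \<in> space M"
    have "x(i := z) \<in> space (PiM (insert i I) (\<lambda>_. M))"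
      using x z by (simp add: space_PiM PiE_fun_upd)
    from bounded_differencesD[OF f_bd insertI2[OF j] this y y']
    show "f (x(j := y, i := z)) - f (x(j := y', i := z)) \<le> d"
      by (simp add: fun_upd_twist[OF ij])
  qed (use int in simp_all)
  finally show "(\<integral>z. f (x(j := y, i := z)) \<partial>M) - (\<integral>z. f (x(j := y', i := z)) \<partial>M) \<le> d"
    by (simp add: prob_space)
qed

lemma nn_integral_exp_section_le:
  fixes f :: "('i \<Rightarrow> 'x) \<Rightarrow> real" and g :: "'x \<Rightarrow> real"
  assumes M: "prob_space M" and I: "finite I" and i: "i \<notin> I"
    and f: "f \<in> borel_measurable (PiM (insert i I) (\<lambda>_. M))"
    and f_bd: "bounded_differences (insert i I) M f d" and x: "x \<in> space (PiM I (\<lambda>_. M))"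
    and g[measurable]: "g \<in> borel_measurable M"
    and g_bounds: "\<And>y. y \<in> space M \<Longrightarrow> 0 \<le> g y \<and> g y \<le> b" and l: "0 \<le> l"
  defines "m \<equiv> \<integral>z. g z \<partial>M"
  shows "(\<integral>\<^sup>+y. exp (f (x(i := y)) + (\<Sum>j\<in>insert i I. l * (m - g ((x(i := y)) j)))) \<partial>M)
         \<le> ennreal (exp ((\<integral>y. f (x(i := y)) \<partial>M) + (\<Sum>j\<in>I. l * (m - g (x j)))))
           * exp (d\<^sup>2 / 4 + l\<^sup>2 * b * m)"
proof -
  interpret prob_space M by (fact M)
  define S where "S = (\<Sum>j\<in>I. l * (m - g (x j)))"
  note [measurable] = measurable_section_PiM[OF f x]
  note one_step = mgf_bounded_range_plus_centered_le[OF
      measurable_section_PiM[OF f x] bounded_differences_section_diff_le[OF f_bd x] g g_bounds l,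
      folded m_def]
  have sum_eq: "(\<Sum>j\<in>insert i I. l * (m - g ((x(i := y)) j))) = l * (m - g y) + S" for y
    using I i by (auto simp: S_def intro!: sum.cong)
  have "(\<integral>\<^sup>+y. exp (f (x(i := y)) + (\<Sum>j\<in>insert i I. l * (m - g ((x(i := y)) j)))) \<partial>M)
      = (\<integral>\<^sup>+y. ennreal (exp S) * ennreal (exp (f (x(i := y)) + l * (m - g y))) \<partial>M)"
    by (intro nn_integral_cong) (simp only: sum_eq, simp add: add_ac flip: ennreal_mult exp_add)
  also have "\<dots> = exp S * (\<integral>\<^sup>+y. exp (f (x(i := y)) + l * (m - g y)) \<partial>M)"
    by (rule nn_integral_cmult) simp
  also have "(\<integral>\<^sup>+y. exp (f (x(i := y)) + l * (m - g y)) \<partial>M)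
      = ennreal (\<integral>y. exp (f (x(i := y)) + l * (m - g y)) \<partial>M)"
    by (intro nn_integral_eq_integral[OF one_step(1)] AE_I2 exp_ge_zero)
  also have "ennreal (exp S) * \<dots>
      \<le> ennreal (exp S) * ennreal (exp ((\<integral>y. f (x(i := y)) \<partial>M) + (d\<^sup>2 / 4 + l\<^sup>2 * b * m)))"
    using one_step(2) by (intro mult_left_mono ennreal_leI) (simp_all add: add.assoc)
  also have "\<dots> = ennreal (exp ((\<integral>y. f (x(i := y)) \<partial>M) + S)) * exp (d\<^sup>2 / 4 + l\<^sup>2 * b * m)"
    by (simp add: add_ac flip: ennreal_mult exp_add)
  finally show ?thesis by (simp only: S_def)
qed

lemma nn_integral_PiM_exp_bounded_differences_le:
  fixes f :: "('i \<Rightarrow> 'x) \<Rightarrow> real" and g :: "'x \<Rightarrow> real"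
  assumes M: "prob_space M" and I: "finite I"
    and f: "f \<in> borel_measurable (PiM I (\<lambda>_. M))" and f_bd: "bounded_differences I M f d"
    and g[measurable]: "g \<in> borel_measurable M"
    and g_bounds: "\<And>y. y \<in> space M \<Longrightarrow> 0 \<le> g y \<and> g y \<le> b" and l: "0 \<le> l"
  shows "(\<integral>\<^sup>+x. exp (f x + (\<Sum>i\<in>I. l * ((\<integral>z. g z \<partial>M) - g (x i)))) \<partial>PiM I (\<lambda>_. M))
         \<le> exp ((\<integral>x. f x \<partial>PiM I (\<lambda>_. M)) + real (card I) * (d\<^sup>2 / 4 + l\<^sup>2 * b * (\<integral>z. g z \<partial>M)))"
  using I f f_bd
proof (induction I arbitrary: f rule: finite_induct)
  case empty
  show ?case
    by (simp add: PiM_empty nn_integral_count_space_finite lebesgue_integral_count_space_finite)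
next
  case (insert i I)
  interpret prob_space M by fact
  interpret product_sigma_finite "\<lambda>_. M" by unfold_locales
  note f[measurable] = insert.prems(1) and f_bd = insert.prems(2)
  define m where "m = (\<integral>z. g z \<partial>M)"
  define K where "K = d\<^sup>2 / 4 + l\<^sup>2 * b * m"
  define S where "S = (\<lambda>x. \<Sum>j\<in>I. l * (m - g (x j)))"
  define f_avg where "f_avg = (\<lambda>x. \<integral>y. f (x(i := y)) \<partial>M)"
  have f_avg_measurable: "f_avg \<in> borel_measurable (PiM I (\<lambda>_. M))"
    unfolding f_avg_def
    by (rule borel_measurable_lebesgue_integral)
      (use measurable_comp[OF measurable_add_dim f] in \<open>simp add: comp_def case_prod_beta'\<close>)
  have f_avg_bd: "bounded_differences I M f_avg d"
    unfolding f_avg_def by (rule bounded_differences_integral_section[OF M insert.hyps(2) f f_bd])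
  have IH: "(\<integral>\<^sup>+x. exp (f_avg x + S x) \<partial>PiM I (\<lambda>_. M))
      \<le> exp ((\<integral>x. f_avg x \<partial>PiM I (\<lambda>_. M)) + real (card I) * K)"
    using insert.IH[OF f_avg_measurable f_avg_bd] by (simp add: S_def K_def m_def)
  have inner: "(\<integral>\<^sup>+y. exp (f (x(i := y)) + (\<Sum>j\<in>insert i I. l * (m - g ((x(i := y)) j)))) \<partial>M)
      \<le> ennreal (exp (f_avg x + S x)) * exp K"
    if x: "x \<in> space (PiM I (\<lambda>_. M))" for x
    using nn_integral_exp_section_le[OF M insert.hyps f f_bd x g g_bounds l]
    by (simp only: m_def K_def S_def f_avg_def)
  have "(\<integral>\<^sup>+x. exp (f x + (\<Sum>j\<in>insert i I. l * (m - g (x j)))) \<partial>PiM (insert i I) (\<lambda>_. M))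
      = (\<integral>\<^sup>+x. (\<integral>\<^sup>+y. exp (f (x(i := y)) + (\<Sum>j\<in>insert i I. l * (m - g ((x(i := y)) j)))) \<partial>M)
           \<partial>PiM I (\<lambda>_. M))"
    by (rule product_nn_integral_insert[OF insert.hyps]) measurable
  also have "\<dots> \<le> (\<integral>\<^sup>+x. ennreal (exp (f_avg x + S x)) * exp K \<partial>PiM I (\<lambda>_. M))"
    by (rule nn_integral_mono) (use inner in auto)
  also have "\<dots> = (\<integral>\<^sup>+x. exp (f_avg x + S x) \<partial>PiM I (\<lambda>_. M)) * exp K"
    by (rule nn_integral_multc) (use f_avg_measurable in \<open>simp add: S_def\<close>)
  also have "\<dots> \<le> ennreal (exp ((\<integral>x. f_avg x \<partial>PiM I (\<lambda>_. M)) + real (card I) * K)) * exp K"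
    by (rule mult_right_mono[OF IH]) simp
  also have "(\<integral>x. f_avg x \<partial>PiM I (\<lambda>_. M)) = (\<integral>x. f x \<partial>PiM (insert i I) (\<lambda>_. M))"
    unfolding f_avg_def
    by (rule product_integral_insert[symmetric])
      (use insert.hyps integrable_bounded_differences_PiM(1)[OF M _ f f_bd] in auto)
  also have "ennreal (exp ((\<integral>x. f x \<partial>PiM (insert i I) (\<lambda>_. M)) + real (card I) * K)) * exp K
      = exp ((\<integral>x. f x \<partial>PiM (insert i I) (\<lambda>_. M)) + real (card (insert i I)) * K)"
    using insert.hyps by (simp add: algebra_simps flip: ennreal_mult exp_add)
  finally show ?case by (simp only: m_def K_def)
qed

lemma nn_integral_PiM_exp_bounded_differences_compensated_le:
  fixes f :: "('i \<Rightarrow> 'x) \<Rightarrow> real" and g :: "'x \<Rightarrow> real"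
  assumes M: "prob_space M" and I: "finite I"
    and f: "f \<in> borel_measurable (PiM I (\<lambda>_. M))" and f_bd: "bounded_differences I M f d"
    and g: "g \<in> borel_measurable M"
    and g_bounds: "\<And>y. y \<in> space M \<Longrightarrow> 0 \<le> g y \<and> g y \<le> b" and l: "0 \<le> l"
  shows "(\<integral>\<^sup>+x. exp (f x + (\<Sum>i\<in>I. l * ((\<integral>z. g z \<partial>M) - g (x i)))
            - real (card I) * (d\<^sup>2 / 4 + l\<^sup>2 * b * (\<integral>z. g z \<partial>M))) \<partial>PiM I (\<lambda>_. M))
         \<le> (\<integral>\<^sup>+x. exp (f x) \<partial>PiM I (\<lambda>_. M))"
proof -
  interpret P: prob_space "PiM I (\<lambda>_. M)"
    using M by (intro prob_space_PiM) simp
  define C where "C = real (card I) * (d\<^sup>2 / 4 + l\<^sup>2 * b * (\<integral>z. g z \<partial>M))"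
  define S where "S = (\<lambda>x. \<Sum>i\<in>I. l * ((\<integral>z. g z \<partial>M) - g (x i)))"
  note int = integrable_bounded_differences_PiM[OF M I f f_bd]
  have "(\<integral>\<^sup>+x. exp (f x + S x - C) \<partial>PiM I (\<lambda>_. M))
      = (\<integral>\<^sup>+x. exp (f x + S x) \<partial>PiM I (\<lambda>_. M)) * exp (- C)"
    by (subst nn_integral_multc[symmetric]) (use f g in \<open>simp_all add: S_def flip: ennreal_mult exp_add\<close>)
  also have "\<dots> \<le> ennreal (exp (P.expectation f + C)) * exp (- C)"
    using nn_integral_PiM_exp_bounded_differences_le[OF M I f f_bd g g_bounds l]
    by (intro mult_right_mono) (simp_all add: S_def C_def)
  also have "\<dots> = exp (P.expectation f)"
    by (simp flip: ennreal_mult exp_add)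
  also have "\<dots> \<le> ennreal (P.expectation (\<lambda>x. exp (f x)))"
    by (intro ennreal_leI P.jensens_inequality[where I=UNIV]) (use int exp_convex in auto)
  also have "ennreal (P.expectation (\<lambda>x. exp (f x))) = (\<integral>\<^sup>+x. exp (f x) \<partial>PiM I (\<lambda>_. M))"
    by (rule nn_integral_eq_integral[symmetric]) (use int in auto)
  finally show ?thesis by (simp add: S_def C_def)
qed

section \<open>Gibbs algorithms\<close>

lemma ennreal_diff_le_of_le_add:
  assumes "ennreal a \<le> X + ennreal \<delta>" and "0 \<le> \<delta>"
  shows "ennreal (a - \<delta>) \<le> X"
proof (cases X rule: ennreal_cases)
  case (real r)
  have "ennreal a \<le> ennreal (r + \<delta>)"
    using assms real by (simp add: ennreal_plus)
  hence "a \<le> r + \<delta>" using real assms(2) by (subst (asm) ennreal_le_iff) auto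
  thus ?thesis unfolding \<open>X = ennreal r\<close> by (intro ennreal_leI) simp
qed simp

lemma sigma_finite_measure_if_integrable_pos:
  fixes f :: "'a \<Rightarrow> real"
  assumes f_int: "integrable M f" and f_pos: "\<And>x. x \<in> space M \<Longrightarrow> 0 < f x"
  shows "sigma_finite_measure M"
proof
  have f[measurable]: "f \<in> borel_measurable M" using f_int by simp
  define A where "A = range (\<lambda>k::nat. {x \<in> space M. 1 \<le> ennreal (real k + 1) * ennreal (f x)})"
  have f_finite: "(\<integral>\<^sup>+x. ennreal (f x) * indicator (space M) x \<partial>M) < \<infinity>"
  proof -
    have "(\<integral>\<^sup>+x. ennreal (f x) * indicator (space M) x \<partial>M) = (\<integral>\<^sup>+x. ennreal (f x) \<partial>M)"
      by (rule nn_integral_cong) auto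
    also have "\<dots> = ennreal (\<integral>x. f x \<partial>M)"
      by (rule nn_integral_eq_integral) (use f_int f_pos in \<open>auto intro!: AE_I2 less_imp_le\<close>)
    finally show ?thesis by simp
  qed
  show "\<exists>A. countable A \<and> A \<subseteq> sets M \<and> \<Union>A = space M \<and> (\<forall>a\<in>A. emeasure M a \<noteq> \<infinity>)"
  proof (intro exI[of _ A] conjI ballI)
    show "countable A" by (simp add: A_def)
    show "A \<subseteq> sets M" unfolding A_def by (auto intro!: pred_intros_logic) measurable
    show "\<Union>A = space M"
    proof
      show "space M \<subseteq> \<Union>A"
      proof
        fix x assume x: "x \<in> space M"
        obtain k :: nat where "1 / f x < real k" using reals_Archimedean2 by blast
        hence "1 \<le> (real k + 1) * f x" using f_pos[OF x] by (simp add: field_simps)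
        hence "ennreal 1 \<le> ennreal ((real k + 1) * f x)" by (rule ennreal_leI)
        hence "1 \<le> ennreal (real k + 1) * ennreal (f x)"
          using f_pos[OF x] by (subst ennreal_mult[symmetric]) auto
        thus "x \<in> \<Union>A" using x by (auto simp: A_def)
      qed
    qed (auto simp: A_def)
    fix a assume "a \<in> A"
    then obtain k :: nat where a: "a = {x \<in> space M. 1 \<le> ennreal (real k + 1) * ennreal (f x)}"
      by (auto simp: A_def)
    have "emeasure M a \<le> ennreal (real k + 1) * (\<integral>\<^sup>+x. ennreal (f x) * indicator (space M) x \<partial>M)"
      unfolding a by (rule nn_integral_Markov_inequality) auto
    also have "\<dots> < \<infinity>" using f_finite by (simp add: ennreal_mult_less_top)
    finally show "emeasure M a \<noteq> \<infinity>" by simp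
  qed
qed

locale gibbs_algorithm =
  fixes \<pi> :: "'h measure" and S :: "'z measure"
    and Q :: "'z \<Rightarrow> 'h measure" and H :: "'h \<Rightarrow> 'z \<Rightarrow> real"
  assumes prob_space_S: "prob_space S"
    and hamiltonian: "has_hamiltonian \<pi> S Q H"
    and abs_cont: "absolutely_continuous_alg \<pi> S Q"
begin

definition log_density :: "'h \<Rightarrow> 'z \<Rightarrow> real" where
  "log_density h x = H h x - ln (partition_fn \<pi> H x)"

sublocale S: prob_space S by (fact prob_space_S)

lemma measurable_Hamiltonian[measurable]: "(\<lambda>(h, x). H h x) \<in> borel_measurable (\<pi> \<Otimes>\<^sub>M S)"
  and integrable_exp_Hamiltonian: "x \<in> space S \<Longrightarrow> integrable \<pi> (\<lambda>h. exp (H h x))"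
  and Q_eq_density:
    "x \<in> space S \<Longrightarrow> Q x = density \<pi> (\<lambda>h. ennreal (exp (H h x) / partition_fn \<pi> H x))"
  using hamiltonian by (auto simp: has_hamiltonian_def)

lemma prob_space_Q: "x \<in> space S \<Longrightarrow> prob_space (Q x)"
  using abs_cont by (auto simp: absolutely_continuous_alg_def)

lemma sigma_finite_prior: "sigma_finite_measure \<pi>"
proof -
  obtain x0 where "x0 \<in> space S" using S.not_empty by blast
  from integrable_exp_Hamiltonian[OF this] show ?thesis
    by (rule sigma_finite_measure_if_integrable_pos) simp
qed

sublocale \<pi>: sigma_finite_measure \<pi> by (fact sigma_finite_prior)

sublocale pair_sigma_finite S \<pi> ..

lemma measurable_Hamiltonian_swap[measurable]: "(\<lambda>(x, h). H h x) \<in> borel_measurable (S \<Otimes>\<^sub>M \<pi>)"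
  using measurable_comp[OF measurable_pair_swap' measurable_Hamiltonian]
  by (simp add: comp_def case_prod_beta')

lemma borel_measurable_partition_fn[measurable]: "partition_fn \<pi> H \<in> borel_measurable S"
  unfolding partition_fn_def[abs_def] by (rule \<pi>.borel_measurable_lebesgue_integral) measurable

lemma measurable_log_density[measurable]: "(\<lambda>(x, h). log_density h x) \<in> borel_measurable (S \<Otimes>\<^sub>M \<pi>)"
  unfolding log_density_def case_prod_beta' by measurable

lemma emeasure_Q_density:
  assumes x: "x \<in> space S" and A: "A \<in> sets \<pi>"
  shows "emeasure (Q x) A
    = (\<integral>\<^sup>+h. ennreal (exp (H h x) / partition_fn \<pi> H x) * indicator A h \<partial>\<pi>)"
proof -
  have "(\<lambda>h. H h x) \<in> borel_measurable \<pi>"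
    using measurable_comp[OF measurable_Pair2'[OF x] measurable_Hamiltonian] by (simp add: comp_def)
  thus ?thesis
    unfolding Q_eq_density[OF x] using A by (intro emeasure_density) simp_all
qed

lemma emeasure_Q_space: "x \<in> space S \<Longrightarrow> emeasure (Q x) (space \<pi>) = 1"
  using prob_space.emeasure_space_1[OF prob_space_Q] by (simp add: Q_eq_density)

lemma partition_fn_pos:
  assumes x: "x \<in> space S"
  shows "0 < partition_fn \<pi> H x"
proof (rule ccontr)
  assume "\<not> 0 < partition_fn \<pi> H x"
  moreover have "0 \<le> partition_fn \<pi> H x" by (simp add: partition_fn_def)
  ultimately have "partition_fn \<pi> H x = 0" by simp
  hence "emeasure (Q x) (space \<pi>) = 0"
    by (simp add: emeasure_Q_density[OF x])
  thus False using emeasure_Q_space[OF x] by simp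
qed

lemma emeasure_Q_log_density:
  assumes x: "x \<in> space S" and A: "A \<in> sets \<pi>"
  shows "emeasure (Q x) A = (\<integral>\<^sup>+h. ennreal (exp (log_density h x)) * indicator A h \<partial>\<pi>)"
  unfolding emeasure_Q_density[OF assms]
proof (rule nn_integral_cong)
  fix h
  have "exp (H h x) / partition_fn \<pi> H x = exp (log_density h x)"
    using partition_fn_pos[OF x] by (simp add: log_density_def exp_diff)
  thus "ennreal (exp (H h x) / partition_fn \<pi> H x) * indicator A h
      = ennreal (exp (log_density h x)) * indicator A h" by simp
qed

lemma ln_partition_fn_le:
  assumes z: "z \<in> space S" and z': "z' \<in> space S"
    and H_le: "\<And>h. h \<in> space \<pi> \<Longrightarrow> H h z' \<le> H h z + c"
  shows "ln (partition_fn \<pi> H z') \<le> ln (partition_fn \<pi> H z) + c"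
proof -
  have "partition_fn \<pi> H z' \<le> (\<integral>h. exp c * exp (H h z) \<partial>\<pi>)"
    unfolding partition_fn_def
  proof (rule integral_mono)
    fix h assume "h \<in> space \<pi>"
    thus "exp (H h z') \<le> exp c * exp (H h z)" using H_le by (simp flip: exp_add add: add.commute)
  qed (use integrable_exp_Hamiltonian[OF z] integrable_exp_Hamiltonian[OF z'] in simp_all)
  also have "\<dots> = exp c * partition_fn \<pi> H z" by (simp add: partition_fn_def)
  finally have "ln (partition_fn \<pi> H z') \<le> ln (exp c * partition_fn \<pi> H z)"
    using partition_fn_pos[OF z'] by simp
  thus ?thesis using partition_fn_pos[OF z] by (simp add: ln_mult)
qed

lemma log_density_diff_le:
  assumes z: "z \<in> space S" and z': "z' \<in> space S"
    and H_diff: "\<And>h. h \<in> space \<pi> \<Longrightarrow> \<bar>H h z - H h z'\<bar> \<le> c" and h: "h \<in> space \<pi>"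
  shows "log_density h z - log_density h z' \<le> 2 * c"
proof -
  have "ln (partition_fn \<pi> H z') \<le> ln (partition_fn \<pi> H z) + c"
    using H_diff by (intro ln_partition_fn_le[OF z z']) (simp add: abs_diff_le_iff algebra_simps)
  thus ?thesis using H_diff[OF h] by (simp add: log_density_def abs_diff_le_iff)
qed

lemma sets_sublevel:
  fixes F :: "'h \<Rightarrow> 'z \<Rightarrow> real"
  assumes F: "(\<lambda>(x, h). F h x) \<in> borel_measurable (S \<Otimes>\<^sub>M \<pi>)" and x: "x \<in> space S"
  shows "{h \<in> space \<pi>. F h x \<le> t} \<in> sets \<pi>"
proof -
  have "(\<lambda>h. F h x) \<in> borel_measurable \<pi>"
    using measurable_comp[OF measurable_Pair1'[OF x] F] by (simp add: comp_def)
  thus ?thesis by (simp add: borel_measurable_iff_le)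
qed

lemma measurable_emeasure_Q_sublevel:
  fixes F :: "'h \<Rightarrow> 'z \<Rightarrow> real"
  assumes F[measurable]: "(\<lambda>(x, h). F h x) \<in> borel_measurable (S \<Otimes>\<^sub>M \<pi>)"
  shows "(\<lambda>x. emeasure (Q x) {h \<in> space \<pi>. F h x \<le> t}) \<in> borel_measurable S"
proof -
  define A where "A = {p \<in> space (S \<Otimes>\<^sub>M \<pi>). F (snd p) (fst p) \<le> t}"
  have "(\<lambda>p. F (snd p) (fst p)) \<in> borel_measurable (S \<Otimes>\<^sub>M \<pi>)"
    using F by (simp add: case_prod_beta')
  hence [measurable]: "A \<in> sets (S \<Otimes>\<^sub>M \<pi>)"
    unfolding A_def by (simp add: borel_measurable_iff_le)
  have "emeasure (Q x) {h \<in> space \<pi>. F h x \<le> t}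
      = (\<integral>\<^sup>+h. ennreal (exp (log_density h x)) * indicator A (x, h) \<partial>\<pi>)" if x: "x \<in> space S" for x
    unfolding emeasure_Q_log_density[OF x sets_sublevel[OF F x]]
    by (rule nn_integral_cong) (use x in \<open>auto simp: A_def space_pair_measure indicator_def\<close>)
  moreover have "(\<lambda>x. \<integral>\<^sup>+h. ennreal (exp (log_density h x)) * indicator A (x, h) \<partial>\<pi>) \<in> borel_measurable S"
    by measurable
  ultimately show ?thesis by (subst measurable_cong) auto
qed

lemma nn_integral_exp_log_density:
  assumes x: "x \<in> space S"
  shows "(\<integral>\<^sup>+h. exp (log_density h x) \<partial>\<pi>) = 1"
proof -
  have "(\<integral>\<^sup>+h. exp (log_density h x) \<partial>\<pi>)
      = (\<integral>\<^sup>+h. ennreal (exp (log_density h x)) * indicator (space \<pi>) h \<partial>\<pi>)"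
    by (rule nn_integral_cong) simp
  also have "\<dots> = emeasure (Q x) (space \<pi>)"
    by (rule emeasure_Q_log_density[OF x, symmetric]) simp
  finally show ?thesis by (simp add: emeasure_Q_space[OF x])
qed

lemma nn_integral_exp_log_density_plus_le_1:
  fixes F :: "'h \<Rightarrow> 'z \<Rightarrow> real"
  assumes F[measurable]: "(\<lambda>(x, h). F h x) \<in> borel_measurable (S \<Otimes>\<^sub>M \<pi>)"
    and F_moment: "\<And>h. h \<in> space \<pi> \<Longrightarrow>
      (\<integral>\<^sup>+x. exp (log_density h x + F h x) \<partial>S) \<le> (\<integral>\<^sup>+x. exp (log_density h x) \<partial>S)"
  shows "(\<integral>\<^sup>+x. (\<integral>\<^sup>+h. exp (log_density h x + F h x) \<partial>\<pi>) \<partial>S) \<le> 1"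
proof -
  have "(\<integral>\<^sup>+x. (\<integral>\<^sup>+h. exp (log_density h x + F h x) \<partial>\<pi>) \<partial>S)
      = (\<integral>\<^sup>+h. (\<integral>\<^sup>+x. exp (log_density h x + F h x) \<partial>S) \<partial>\<pi>)"
    by (rule Fubini'[symmetric]) measurable
  also have "\<dots> \<le> (\<integral>\<^sup>+h. (\<integral>\<^sup>+x. exp (log_density h x) \<partial>S) \<partial>\<pi>)"
    by (rule nn_integral_mono) (rule F_moment)
  also have "\<dots> = (\<integral>\<^sup>+x. (\<integral>\<^sup>+h. exp (log_density h x) \<partial>\<pi>) \<partial>S)"
    by (rule Fubini') measurable
  also have "\<dots> = (\<integral>\<^sup>+x. 1 \<partial>S)"
    by (rule nn_integral_cong) (rule nn_integral_exp_log_density)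
  finally show ?thesis by (simp add: S.emeasure_space_1)
qed

lemma one_le_emeasure_Q_sublevel_plus:
  fixes F :: "'h \<Rightarrow> 'z \<Rightarrow> real"
  assumes F[measurable]: "(\<lambda>(x, h). F h x) \<in> borel_measurable (S \<Otimes>\<^sub>M \<pi>)"
    and x: "x \<in> space S" and \<delta>: "0 < \<delta>"
  shows "1 \<le> emeasure (Q x) {h \<in> space \<pi>. F h x \<le> ln (1 / \<delta>)}
           + \<delta> * (\<integral>\<^sup>+h. exp (log_density h x + F h x) \<partial>\<pi>)"
proof -
  define t where "t = ln (1 / \<delta>)"
  define B where "B = {h \<in> space \<pi>. F h x \<le> t}"
  have B: "B \<in> sets \<pi>" unfolding B_def by (rule sets_sublevel[OF F x])
  \<comment> \<open>Markov's inequality for \<open>exp F\<close> under \<open>Q x\<close>.\<close>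
  have "emeasure (Q x) (space \<pi> - B)
      = (\<integral>\<^sup>+h. ennreal (exp (log_density h x)) * indicator (space \<pi> - B) h \<partial>\<pi>)"
    using B by (intro emeasure_Q_log_density[OF x]) auto
  also have "\<dots> \<le> (\<integral>\<^sup>+h. \<delta> * ennreal (exp (log_density h x + F h x)) \<partial>\<pi>)"
  proof (rule nn_integral_mono)
    fix h assume h: "h \<in> space \<pi>"
    show "ennreal (exp (log_density h x)) * indicator (space \<pi> - B) h
        \<le> \<delta> * ennreal (exp (log_density h x + F h x))"
    proof (cases "h \<in> B")
      case False
      hence "t < F h x" using h by (auto simp: B_def)
      have "exp (log_density h x) = \<delta> * exp (log_density h x + t)"
        using \<delta> by (simp add: t_def exp_add)
      also have "\<dots> \<le> \<delta> * exp (log_density h x + F h x)"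
        using \<open>t < F h x\<close> \<delta> by simp
      finally have "ennreal (exp (log_density h x)) \<le> ennreal (\<delta> * exp (log_density h x + F h x))"
        by (rule ennreal_leI)
      thus ?thesis using False h \<delta> by (simp add: ennreal_mult)
    qed simp
  qed
  also have "\<dots> = \<delta> * (\<integral>\<^sup>+h. exp (log_density h x + F h x) \<partial>\<pi>)"
    using x by (intro nn_integral_cmult) measurable
  finally have complement: "emeasure (Q x) (space \<pi> - B) \<le> \<delta> * (\<integral>\<^sup>+h. exp (log_density h x + F h x) \<partial>\<pi>)" .
  have "B \<union> (space \<pi> - B) = space \<pi>" by (auto simp: B_def)
  hence "1 = emeasure (Q x) (B \<union> (space \<pi> - B))"
    using emeasure_Q_space[OF x] by simp
  also have "\<dots> = emeasure (Q x) B + emeasure (Q x) (space \<pi> - B)"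
    using B by (intro plus_emeasure[symmetric]) (auto simp: Q_eq_density[OF x])
  also have "\<dots> \<le> emeasure (Q x) B + \<delta> * (\<integral>\<^sup>+h. exp (log_density h x + F h x) \<partial>\<pi>)"
    using complement by (rule add_left_mono)
  finally show ?thesis by (simp add: B_def t_def)
qed

lemma tail_bound:
  fixes F :: "'h \<Rightarrow> 'z \<Rightarrow> real"
  assumes F[measurable]: "(\<lambda>(x, h). F h x) \<in> borel_measurable (S \<Otimes>\<^sub>M \<pi>)"
    and F_moment: "\<And>h. h \<in> space \<pi> \<Longrightarrow>
      (\<integral>\<^sup>+x. exp (log_density h x + F h x) \<partial>S) \<le> (\<integral>\<^sup>+x. exp (log_density h x) \<partial>S)"
    and \<delta>: "0 < \<delta>"
  shows "ennreal (1 - \<delta>) \<le> (\<integral>\<^sup>+x. emeasure (Q x) {h \<in> space \<pi>. F h x \<le> ln (1 / \<delta>)} \<partial>S)"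
proof -
  define P where "P = (\<lambda>x. emeasure (Q x) {h \<in> space \<pi>. F h x \<le> ln (1 / \<delta>)})"
  define G where "G = (\<lambda>x. \<integral>\<^sup>+h. exp (log_density h x + F h x) \<partial>\<pi>)"
  have [measurable]: "P \<in> borel_measurable S" "G \<in> borel_measurable S"
    unfolding P_def G_def by (rule measurable_emeasure_Q_sublevel[OF F]) measurable
  have "1 = (\<integral>\<^sup>+x. 1 \<partial>S)" by (simp add: S.emeasure_space_1)
  also have "\<dots> \<le> (\<integral>\<^sup>+x. P x + \<delta> * G x \<partial>S)"
    unfolding P_def G_def
    by (rule nn_integral_mono) (rule one_le_emeasure_Q_sublevel_plus[OF F _ \<delta>])
  also have "\<dots> = (\<integral>\<^sup>+x. P x \<partial>S) + \<delta> * (\<integral>\<^sup>+x. G x \<partial>S)"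
    by (simp add: nn_integral_add nn_integral_cmult)
  also have "\<dots> \<le> (\<integral>\<^sup>+x. P x \<partial>S) + \<delta>"
    using mult_left_mono[OF nn_integral_exp_log_density_plus_le_1[OF F F_moment], of "ennreal \<delta>"]
    by (intro add_left_mono) (simp add: G_def)
  finally have "ennreal 1 \<le> (\<integral>\<^sup>+x. P x \<partial>S) + \<delta>" by simp
  from ennreal_diff_le_of_le_add[OF this] \<delta> show ?thesis by (simp add: P_def)
qed

end

section \<open>The generalization bound\<close>

lemma le_of_le_two_sqrt:
  fixes D L a :: real
  assumes a: "0 \<le> a" and L: "0 \<le> L" and D: "D \<le> 2 * sqrt (a * (L + D))"
  shows "D \<le> 2 * sqrt (L * a) + 4 * a"
proof (rule ccontr)
  define s where "s = sqrt (L * a)"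
  have s: "0 \<le> s" "s\<^sup>2 = L * a" using a L by (auto simp: s_def)
  assume "\<not> ?thesis"
  hence gt: "2 * s + 4 * a < D" by (simp add: s_def)
  hence "0 \<le> L + D" using s a L by linarith
  hence "D\<^sup>2 \<le> (2 * sqrt (a * (L + D)))\<^sup>2"
    using gt s a by (intro power_mono[OF D]) linarith
  also have "\<dots> = 4 * (a * (L + D))"
    using mult_nonneg_nonneg[OF a \<open>0 \<le> L + D\<close>] by (simp only: power_mult_distrib real_sqrt_pow2) simp
  also have "\<dots> = 4 * (a * L) + 4 * a * D" by (simp add: algebra_simps)
  finally have "D * (D - 4 * a) \<le> 4 * s\<^sup>2"
    using s by (simp add: power2_eq_square algebra_simps)
  moreover have "(2 * s + 4 * a) * (2 * s) < D * (D - 4 * a)"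
    using gt s a by (intro mult_strict_mono) auto
  moreover have "0 \<le> a * s" using a s by simp
  ultimately show False by (simp add: power2_eq_square algebra_simps)
qed

lemma diff_le_of_optimized_exponent_le:
  fixes L m b u l :: real
  assumes L: "0 \<le> L" and m: "0 \<le> m" "m \<le> b" and u: "0 < u"
    and l: "l = (if 0 < b * m then sqrt (u / (b * m)) else 0)"
    and exponent: "l * (m - L) - l\<^sup>2 * b * m \<le> u"
  shows "m - L \<le> 2 * sqrt (L * b * u) + 5 * b * u"
proof (cases "0 < b * m")
  case False
  have "m = 0"
  proof (rule ccontr)
    assume "m \<noteq> 0"
    hence "0 < b * m" using m by (intro mult_pos_pos) auto
    thus False using False by simp
  qed
  moreover have "0 \<le> sqrt (L * b * u)" "0 \<le> b * u" using L m u by simp_all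
  ultimately show ?thesis using L by linarith
next
  case True
  have b: "0 < b" and "0 < m" using True m by (simp_all add: zero_less_mult_iff)
  \<comment> \<open>\<open>l\<close> minimises \<open>(u + l\<^sup>2 b m) / l\<close>; at it both summands equal \<open>sqrt (u b m)\<close>.\<close>
  have l_eq: "l = sqrt (u / (b * m))" using True by (simp add: l)
  have l_pos: "0 < l" using True u by (simp add: l_eq)
  have l_sq: "l\<^sup>2 * b * m = u"
    using True u b \<open>0 < m\<close> by (simp add: l_eq)
  have "sqrt (u * (b * m)) * l = sqrt (u * (b * m) * (u / (b * m)))"
    unfolding l_eq by (rule real_sqrt_mult[symmetric])
  also have "\<dots> = u" using u b \<open>0 < m\<close> by (simp add: power2_eq_square[symmetric])
  finally have l_u: "u / l = sqrt (u * (b * m))" using l_pos by (simp add: field_simps)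
  have "l * (m - L) \<le> 2 * u" using exponent l_sq by simp
  hence "m - L \<le> 2 * (u / l)" using l_pos by (simp add: field_simps)
  hence "m - L \<le> 2 * sqrt (b * u * (L + (m - L)))" by (simp add: l_u algebra_simps)
  hence "m - L \<le> 2 * sqrt (L * (b * u)) + 4 * (b * u)"
    using b u L by (intro le_of_le_two_sqrt) auto
  moreover have "0 < b * u" using b u by simp
  ultimately show ?thesis by (simp add: mult.assoc)
qed

lemma measurable_hypothesis:
  assumes "(\<lambda>(h, y). h y) \<in> borel_measurable (\<pi> \<Otimes>\<^sub>M M)" and "h \<in> space \<pi>"
  shows "h \<in> borel_measurable M"
  using measurable_comp[OF measurable_Pair1'[OF assms(2)] assms(1)] by (simp add: comp_def)

lemma measurable_mean:
  fixes \<pi> :: "('x \<Rightarrow> real) measure"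
  assumes "prob_space M" and "(\<lambda>(h, y). h y) \<in> borel_measurable (\<pi> \<Otimes>\<^sub>M M)"
  shows "(\<lambda>h. \<integral>y. h y \<partial>M) \<in> borel_measurable \<pi>"
proof -
  interpret prob_space M by (fact assms(1))
  from borel_measurable_lebesgue_integral[where f="\<lambda>h y. h y" and N=\<pi>] assms(2)
  show ?thesis by simp
qed

lemma measurable_coordinate_eval:
  assumes eval: "(\<lambda>(h, y). h y) \<in> borel_measurable (\<pi> \<Otimes>\<^sub>M M)" and i: "i \<in> {..<n}"
  shows "(\<lambda>(x, h). h (x i)) \<in> borel_measurable (sample_measure n M \<Otimes>\<^sub>M \<pi>)"
proof -
  have "(\<lambda>(x, h). (h, x i)) \<in> measurable (sample_measure n M \<Otimes>\<^sub>M \<pi>) (\<pi> \<Otimes>\<^sub>M M)"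
    unfolding sample_measure_def using i by measurable
  from measurable_comp[OF this eval] show ?thesis by (simp add: comp_def case_prod_beta')
qed

lemma measurable_emp_loss_gen_gap:
  assumes M: "prob_space M" and eval: "(\<lambda>(h, y). h y) \<in> borel_measurable (\<pi> \<Otimes>\<^sub>M M)"
  shows "(\<lambda>(x, h). emp_loss n h x) \<in> borel_measurable (sample_measure n M \<Otimes>\<^sub>M \<pi>)"
    and "(\<lambda>(x, h). gen_gap M n h x) \<in> borel_measurable (sample_measure n M \<Otimes>\<^sub>M \<pi>)"
proof -
  note [measurable] = measurable_coordinate_eval[OF eval]
  show emp_loss: "(\<lambda>(x, h). emp_loss n h x) \<in> borel_measurable (sample_measure n M \<Otimes>\<^sub>M \<pi>)"
    unfolding emp_loss_def case_prod_beta' by measurable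
  note [measurable] = measurable_mean[OF M eval]
  from emp_loss show "(\<lambda>(x, h). gen_gap M n h x) \<in> borel_measurable (sample_measure n M \<Otimes>\<^sub>M \<pi>)"
    unfolding gen_gap_def case_prod_beta' by measurable
qed

lemma measurable_emp_loss_gen_gap_section:
  assumes M: "prob_space M" and eval: "(\<lambda>(h, y). h y) \<in> borel_measurable (\<pi> \<Otimes>\<^sub>M M)"
    and x: "x \<in> space (sample_measure n M)"
  shows "(\<lambda>h. emp_loss n h x) \<in> borel_measurable \<pi>"
    and "(\<lambda>h. gen_gap M n h x) \<in> borel_measurable \<pi>"
  using measurable_comp[OF measurable_Pair1'[OF x] measurable_emp_loss_gen_gap(1)[OF M eval]]
    measurable_comp[OF measurable_Pair1'[OF x] measurable_emp_loss_gen_gap(2)[OF M eval]]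
  by (simp_all add: comp_def)

lemma bounded_differences_log_density:
  assumes "gibbs_algorithm \<pi> (sample_measure n M) Q H"
    and H_diff: "\<And>k h y y' x. k < n \<Longrightarrow> h \<in> space \<pi> \<Longrightarrow> y \<in> space M \<Longrightarrow> y' \<in> space M \<Longrightarrow>
           x \<in> space (sample_measure n M) \<Longrightarrow> diff_op k y y' H h x \<le> c"
    and h: "h \<in> space \<pi>"
  shows "bounded_differences {..<n} M (gibbs_algorithm.log_density \<pi> H h) (2 * c)"
  unfolding bounded_differences_def
proof (intro ballI)
  interpret gibbs_algorithm \<pi> "sample_measure n M" Q H by fact
  fix i x y y' assume i: "i \<in> {..<n}" and x: "x \<in> space (PiM {..<n} (\<lambda>_. M))"
    and y: "y \<in> space M" and y': "y' \<in> space M"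
  have S_space: "space (sample_measure n M) = space (PiM {..<n} (\<lambda>_. M))"
    by (simp add: sample_measure_def)
  have upd: "x(i := z) \<in> space (sample_measure n M)" if "z \<in> space M" for z
  proof -
    have "x(i := z) \<in> PiE (insert i {..<n}) (\<lambda>_. space M)"
      using x that by (intro PiE_fun_upd) (simp_all add: space_PiM)
    thus ?thesis using i by (simp add: S_space space_PiM insert_absorb)
  qed
  show "log_density h (x(i := y)) - log_density h (x(i := y')) \<le> 2 * c"
  proof (rule log_density_diff_le[OF upd[OF y] upd[OF y'] _ h])
    fix h' assume "h' \<in> space \<pi>"
    thus "\<bar>H h' (x(i := y)) - H h' (x(i := y'))\<bar> \<le> c"
      using H_diff[of i h' y y' x] H_diff[of i h' y' y x] i x y y'
      by (auto simp: diff_op_def subst_coord_def S_space abs_diff_le_iff)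
  qed
qed

lemma tail_bound_gen_gap_rate:
  fixes M :: "'x measure" and \<pi> :: "('x \<Rightarrow> real) measure"
    and Q :: "(nat \<Rightarrow> 'x) \<Rightarrow> ('x \<Rightarrow> real) measure"
    and H :: "('x \<Rightarrow> real) \<Rightarrow> (nat \<Rightarrow> 'x) \<Rightarrow> real"
    and rate :: "('x \<Rightarrow> real) \<Rightarrow> real"
  assumes M: "prob_space M"
    and eval: "(\<lambda>(h, y). h y) \<in> borel_measurable (\<pi> \<Otimes>\<^sub>M M)"
    and Q: "absolutely_continuous_alg \<pi> (sample_measure n M) Q"
    and H: "has_hamiltonian \<pi> (sample_measure n M) Q H"
    and H_diff: "\<And>k h y y' x. k < n \<Longrightarrow> h \<in> space \<pi> \<Longrightarrow> y \<in> space M \<Longrightarrow> y' \<in> space M \<Longrightarrow>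
           x \<in> space (sample_measure n M) \<Longrightarrow> diff_op k y y' H h x \<le> c"
    and bounds: "\<And>h y. h \<in> space \<pi> \<Longrightarrow> y \<in> space M \<Longrightarrow> 0 \<le> h y \<and> h y \<le> b"
    and rate[measurable]: "rate \<in> borel_measurable \<pi>" and rate_nonneg: "\<And>h. 0 \<le> rate h"
    and \<delta>: "0 < \<delta>"
  shows "ennreal (1 - \<delta>) \<le> (\<integral>\<^sup>+x. emeasure (Q x)
           {h \<in> space \<pi>. real n * (rate h * gen_gap M n h x - (rate h)\<^sup>2 * b * (\<integral>y. h y \<partial>M) - c\<^sup>2)
              \<le> ln (1 / \<delta>)} \<partial>sample_measure n M)"
proof -
  have "prob_space (sample_measure n M)"
    unfolding sample_measure_def using M by (intro prob_space_PiM) simp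
  then interpret gibbs_algorithm \<pi> "sample_measure n M" Q H
    using Q H by (intro gibbs_algorithm.intro)
  define mean where "mean = (\<lambda>h::'x \<Rightarrow> real. \<integral>y. h y \<partial>M)"
  have [measurable]: "mean \<in> borel_measurable \<pi>"
    unfolding mean_def by (rule measurable_mean[OF M eval])
  note [measurable] = measurable_emp_loss_gen_gap[OF M eval, of n]
  define F where "F = (\<lambda>h x. real n * (rate h * gen_gap M n h x - (rate h)\<^sup>2 * b * mean h - c\<^sup>2))"
  have F_sum: "F h x = (\<Sum>i\<in>{..<n}. rate h * (mean h - h (x i)))
      - real (card {..<n}) * ((2 * c)\<^sup>2 / 4 + (rate h)\<^sup>2 * b * mean h)" for h x
    by (cases "n = 0")
      (simp_all add: F_def gen_gap_def emp_loss_def mean_def sum_subtractf power2_eq_square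
        flip: sum_distrib_left, simp_all add: field_simps)
  have "ennreal (1 - \<delta>) \<le> (\<integral>\<^sup>+x. emeasure (Q x) {h \<in> space \<pi>. F h x \<le> ln (1 / \<delta>)} \<partial>sample_measure n M)"
  proof (rule tail_bound[OF _ _ \<delta>])
    show "(\<lambda>(x, h). F h x) \<in> borel_measurable (sample_measure n M \<Otimes>\<^sub>M \<pi>)"
      unfolding F_def case_prod_beta' by measurable
    fix h assume h: "h \<in> space \<pi>"
    have "log_density h \<in> borel_measurable (PiM {..<n} (\<lambda>_. M))"
      using measurable_comp[OF measurable_Pair2'[OF h] measurable_log_density]
      by (simp add: sample_measure_def comp_def)
    from nn_integral_PiM_exp_bounded_differences_compensated_le[OF M _ this
        bounded_differences_log_density[OF gibbs_algorithm_axioms H_diff h]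
        measurable_hypothesis[OF eval h] bounds[OF h] rate_nonneg]
    show "(\<integral>\<^sup>+x. exp (log_density h x + F h x) \<partial>sample_measure n M)
        \<le> (\<integral>\<^sup>+x. exp (log_density h x) \<partial>sample_measure n M)"
      by (simp add: F_sum sample_measure_def add_diff_eq mean_def)
  qed
  thus ?thesis by (simp add: F_def mean_def)
qed

lemma gen_gap_le_of_optimized_exponent_le:
  assumes M: "prob_space M" and h: "h \<in> borel_measurable M"
    and bounds: "\<And>y. y \<in> space M \<Longrightarrow> 0 \<le> h y \<and> h y \<le> b"
    and x: "x \<in> space (sample_measure n M)" and u: "0 < u"
    and l: "l = (if 0 < b * (\<integral>y. h y \<partial>M) then sqrt (u / (b * (\<integral>y. h y \<partial>M))) else 0)"
    and exponent: "l * gen_gap M n h x - l\<^sup>2 * b * (\<integral>y. h y \<partial>M) \<le> u"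
  shows "gen_gap M n h x \<le> 2 * sqrt (emp_loss n h x * b * u) + 5 * b * u"
proof -
  interpret prob_space M by (fact M)
  have "x i \<in> space M" if "i < n" for i
    using x that by (auto simp: sample_measure_def space_PiM)
  hence L: "0 \<le> emp_loss n h x"
    using bounds by (auto simp: emp_loss_def intro!: divide_nonneg_nonneg sum_nonneg)
  have int_h: "integrable M h"
    using bounds h by (intro integrable_const_bound[where B=b]) auto
  have "0 \<le> (\<integral>y. h y \<partial>M)" "(\<integral>y. h y \<partial>M) \<le> b"
    using int_h bounds by (auto intro!: integral_ge_const integral_le_const AE_I2)
  from diff_le_of_optimized_exponent_le[OF L this u l] exponent show ?thesis
    by (simp add: gen_gap_def)
qed

theorem corollary7:
  fixes M :: "'x measure" and \<pi> :: "('x \<Rightarrow> real) measure"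
    and Q :: "(nat \<Rightarrow> 'x) \<Rightarrow> ('x \<Rightarrow> real) measure"
    and H :: "('x \<Rightarrow> real) \<Rightarrow> (nat \<Rightarrow> 'x) \<Rightarrow> real"
    and n :: nat and b c \<delta> :: real
  assumes "prob_space M"
    and "n > 0"
    and "(\<lambda>(h, y). h y) \<in> borel_measurable (\<pi> \<Otimes>\<^sub>M M)"
    and "absolutely_continuous_alg \<pi> (sample_measure n M) Q"
    and "has_hamiltonian \<pi> (sample_measure n M) Q H"
    and "\<And>k h y y' x. k < n \<Longrightarrow> h \<in> space \<pi> \<Longrightarrow> y \<in> space M \<Longrightarrow> y' \<in> space M \<Longrightarrow>
           x \<in> space (sample_measure n M) \<Longrightarrow> diff_op k y y' H h x \<le> c"
    and "\<And>h y. h \<in> space \<pi> \<Longrightarrow> y \<in> space M \<Longrightarrow> 0 \<le> h y \<and> h y \<le> b"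
    and "\<delta> > 0"
  shows "(\<integral>\<^sup>+ x. emeasure (Q x)
            {h \<in> space \<pi>. gen_gap M n h x
               \<le> 2 * sqrt (emp_loss n h x * b * (c\<^sup>2 + ln (1 / \<delta>) / real n))
                 + 5 * b * (c\<^sup>2 + ln (1 / \<delta>) / real n)}
          \<partial>sample_measure n M) \<ge> ennreal (1 - \<delta>)"
proof (cases "\<delta> < 1")
  case False
  thus ?thesis by (simp add: ennreal_neg)
next
  case True
  note M = assms(1) and eval = assms(3)
  define u where "u = c\<^sup>2 + ln (1 / \<delta>) / real n"
  have u: "0 < u" using True assms(2,8) by (simp add: u_def add_nonneg_pos)
  define rate where "rate = (\<lambda>h::'x \<Rightarrow> real.
    if 0 < b * (\<integral>y. h y \<partial>M) then sqrt (u / (b * (\<integral>y. h y \<partial>M))) else 0)"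
  have rate_measurable: "rate \<in> borel_measurable \<pi>"
    using measurable_mean[OF M eval] unfolding rate_def by measurable
  have rate_nonneg: "0 \<le> rate h" for h using u by (simp add: rate_def)
  define E where "E = (\<lambda>x. {h \<in> space \<pi>.
    real n * (rate h * gen_gap M n h x - (rate h)\<^sup>2 * b * (\<integral>y. h y \<partial>M) - c\<^sup>2) \<le> ln (1 / \<delta>)})"
  have "ennreal (1 - \<delta>) \<le> (\<integral>\<^sup>+x. emeasure (Q x) (E x) \<partial>sample_measure n M)"
    unfolding E_def by (rule tail_bound_gen_gap_rate[OF assms(1,3,4,5)])
      (use assms(6-8) rate_measurable rate_nonneg in auto)
  also have "\<dots> \<le> (\<integral>\<^sup>+x. emeasure (Q x) {h \<in> space \<pi>. gen_gap M n h x
      \<le> 2 * sqrt (emp_loss n h x * b * u) + 5 * b * u} \<partial>sample_measure n M)"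
  proof (intro nn_integral_mono emeasure_mono subsetI)
    fix x assume x: "x \<in> space (sample_measure n M)"
    note [measurable] = measurable_emp_loss_gen_gap_section[OF M eval x]
    show "{h \<in> space \<pi>. gen_gap M n h x \<le> 2 * sqrt (emp_loss n h x * b * u) + 5 * b * u} \<in> sets (Q x)"
      using assms(4) x by (auto simp: absolutely_continuous_alg_def) measurable
    fix h assume "h \<in> E x"
    hence h: "h \<in> space \<pi>" and "rate h * gen_gap M n h x - (rate h)\<^sup>2 * b * (\<integral>y. h y \<partial>M) \<le> u"
      using assms(2) by (auto simp: E_def u_def field_simps)
    with gen_gap_le_of_optimized_exponent_le[OF M measurable_hypothesis[OF eval h] assms(7)[OF h] x u]
    show "h \<in> {h \<in> space \<pi>. gen_gap M n h x \<le> 2 * sqrt (emp_loss n h x * b * u) + 5 * b * u}"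
      by (simp add: rate_def)
  qed
  finally show ?thesis by (simp add: u_def)
qed

end
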